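(* Let $\mathbb{M}$ be a weight sequence with sequence of quotients $\mathbf{m}$. Then $\beta(\mathbf{m})=\frac{1}{\alpha(\nu_{\mathbf{m}})}$ and $\alpha(\mathbf{m})=\frac{1}{\beta(\nu_{\mathbf{m}})}$ (with the conventions $1/0=\infty$, $1/\infty=0$).
   Context: A weight sequence is $\mathbb{M}=(M_p)_{p\in\mathbb{N}_0}$ of positive reals with $M_0=1$, $M_p^2\le M_{p-1}M_{p+1}$ ($p\ge1$) and $M_p^{1/p}\to\infty$; $m_p=M_{p+1}/M_p$. $\nu_{\mathbf{m}}(t):=\#\{j\in\mathbb{N}_0:m_j\le t\}$ for $t>0$. For a positive measurable $f$ on $[A,\infty)$: $\alpha(f):=\inf\{\alpha:\exists C_\alpha>0\ \forall\Lambda>1,\ \limsup_{x\to\infty}\sup_{\lambda\in[1,\Lambda]}\frac{f(\lambda x)}{\lambda^{\alpha}f(x)}\le C_\alpha\}$ and $\beta(f):=\sup\{\beta:\exists D_\beta>0\ \forall\Lambda>1,\ \liminf_{x\to\infty}\inf_{\lambda\in[1,\Lambda]}\frac{f(\lambda x)}{\lambda^{\beta}f(x)}\ge D_\beta\}$ ($\inf\emptyset=\infty$, $\sup\emptyset=-\infty$); for $\nu_{\mathbf{m}}$ these are computed on $[m_0,\infty)$. For the sequence $\mathbf{m}$, $\alpha(\mathbf{m}),\beta(\mathbf{m})$ are these indices of the step function $f(x)=m_{\lfloor x\rfloor-1}$, $x\ge1$. *)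

theory Defs
  imports "HOL-Analysis.Analysis"
begin

definition weight_sequence :: "(nat \<Rightarrow> real) \<Rightarrow> bool" where
  "weight_sequence M \<longleftrightarrow> M 0 = 1 \<and> (\<forall>p. 0 < M p)
     \<and> (\<forall>p\<ge>1. (M p)\<^sup>2 \<le> M (p - 1) * M (p + 1))
     \<and> filterlim (\<lambda>p. root p (M p)) at_top sequentially"

definition quot :: "(nat \<Rightarrow> real) \<Rightarrow> nat \<Rightarrow> real" where
  "quot M p = M (Suc p) / M p"

definition nu :: "(nat \<Rightarrow> real) \<Rightarrow> real \<Rightarrow> real" where
  "nu m t = real (card {j. m j \<le> t})"

definition step_fun :: "(nat \<Rightarrow> real) \<Rightarrow> real \<Rightarrow> real" where
  "step_fun m x = m (nat (\<lfloor>x\<rfloor> - 1))"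

text \<open>Upper index alpha(f) (values in extended reals; Inf of empty set is \<infinity>).
  Only the behaviour as x tends to infinity matters, so f is given on all reals.\<close>
definition upper_index :: "(real \<Rightarrow> real) \<Rightarrow> ereal" where
  "upper_index f = Inf {ereal a | a. \<exists>C>0. \<forall>\<Lambda>>1.
      Limsup at_top (\<lambda>x. SUP l\<in>{1..\<Lambda>}. ereal (f (l * x) / (l powr a * f x))) \<le> ereal C}"

text \<open>Lower index beta(f) (Sup of empty set is -\<infinity>).\<close>
definition lower_index :: "(real \<Rightarrow> real) \<Rightarrow> ereal" where
  "lower_index f = Sup {ereal b | b. \<exists>D>0. \<forall>\<Lambda>>1.
      Liminf at_top (\<lambda>x. INF l\<in>{1..\<Lambda>}. ereal (f (l * x) / (l powr b * f x))) \<ge> ereal D}"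

end

theory Submission
  imports Defs
begin

(* The step function f x = m (floor x - 1) and the counting function nu_m are inverse to each
   other up to a shift by one: for x >= 1, f x <= t iff x < nu_m t + 1.  Hence a bound
   f (l x) >= D l^b f x valid for all l >= 1 turns into nu_m (l t) <= C l^(1/b) nu_m t, and
   similarly for the three other combinations of upper and lower bounds.  The definitions of the
   indices only ask for such bounds with l in bounded ranges [1, Lambda]; iterating them gives
   bounds for all l >= 1 at the price of an arbitrarily small change of the exponent.  Since both
   functions are nondecreasing, their upper exponents are nonnegative and 0 is a lower exponent,
   so the lower exponents of one function are, up to endpoints, the reciprocals of the upper
   exponents of the other. *)

lemma powr_le_iff_le_powr_inverse:
  fixes x y b :: real
  assumes "0 < b" "0 \<le> x" "0 \<le> y"
  shows "x powr b \<le> y \<longleftrightarrow> x \<le> y powr (1 / b)"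
proof
  assume "x powr b \<le> y"
  then have "(x powr b) powr (1 / b) \<le> y powr (1 / b)"
    using assms by (intro powr_mono2) auto
  then show "x \<le> y powr (1 / b)"
    using assms by (simp add: powr_powr)
next
  assume "x \<le> y powr (1 / b)"
  then have "x powr b \<le> (y powr (1 / b)) powr b"
    using assms by (intro powr_mono2) auto
  then show "x powr b \<le> y"
    using assms by (simp add: powr_powr)
qed

lemma max_one_powr_mult_le:
  fixes c l e :: real
  assumes "0 \<le> c" "1 \<le> l" "0 \<le> e"
  shows "max 1 ((c * l) powr e) \<le> max 1 (c powr e) * l powr e"
proof -
  have "1 \<le> l powr e"
    using assms by (simp add: ge_one_powr_ge_zero)
  then have "1 \<le> max 1 (c powr e) * l powr e"
    using mult_mono[of 1 "max 1 (c powr e)" 1 "l powr e"] by simp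
  moreover have "c powr e * l powr e \<le> max 1 (c powr e) * l powr e"
    by (intro mult_right_mono) auto
  ultimately show ?thesis
    using assms by (simp add: powr_mult)
qed

lemma Sup_le_inverse_Inf:
  fixes A B :: "real set"
  assumes A_nonneg: "\<And>a. a \<in> A \<Longrightarrow> 0 \<le> a"
    and to_A: "\<And>a b. b \<in> B \<Longrightarrow> 0 < b \<Longrightarrow> 1 < a * b \<Longrightarrow> a \<in> A"
  shows "Sup (ereal ` B) \<le> inverse (Inf (ereal ` A))"
proof (rule SUP_least)
  have Inf_nonneg: "0 \<le> Inf (ereal ` A)"
    using A_nonneg by (auto intro: INF_greatest)
  fix b assume "b \<in> B"
  show "ereal b \<le> inverse (Inf (ereal ` A))"
  proof (cases "0 < b")
    case True
    have "Inf (ereal ` A) \<le> ereal (1 / b)"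
    proof (rule dense_ge)
      fix y assume "ereal (1 / b) < y"
      then show "Inf (ereal ` A) \<le> y"
        using to_A[OF \<open>b \<in> B\<close> True] True
        by (cases y) (auto intro!: INF_lower2 simp: field_simps)
    qed
    then have "inverse (ereal (1 / b)) \<le> inverse (Inf (ereal ` A))"
      using True Inf_nonneg by (intro ereal_inverse_antimono) auto
    then show ?thesis
      using True by simp
  next
    case False
    then show ?thesis
      using Inf_nonneg by (simp add: ereal_inverse_nonneg_iff order.trans[of _ 0])
  qed
qed

lemma inverse_Inf_le_Sup:
  fixes A B :: "real set"
  assumes "0 \<in> B"
    and to_B: "\<And>a b. a \<in> A \<Longrightarrow> 0 < b \<Longrightarrow> a * b < 1 \<Longrightarrow> b \<in> B"
  shows "inverse (Inf (ereal ` A)) \<le> Sup (ereal ` B)"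
proof (rule dense_le)
  fix y assume y: "y < inverse (Inf (ereal ` A))"
  show "y \<le> Sup (ereal ` B)"
  proof (cases "y \<le> 0")
    case True
    then show ?thesis
      using \<open>0 \<in> B\<close> by (intro SUP_upper2[of 0]) (auto simp: zero_ereal_def)
  next
    case False
    then obtain r where r: "y = ereal r" "0 < r"
      using y by (cases y) auto
    have "Inf (ereal ` A) < ereal (1 / r)"
    proof (rule ccontr)
      assume "\<not> Inf (ereal ` A) < ereal (1 / r)"
      then have "inverse (Inf (ereal ` A)) \<le> inverse (ereal (1 / r))"
        using r by (intro ereal_inverse_antimono) auto
      then show False
        using y r by simp
    qed
    then obtain a where "a \<in> A" "a < 1 / r"
      by (auto simp: INF_less_iff)
    then have "r \<in> B"
      using to_B r by (simp add: field_simps)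
    then show ?thesis
      using r by (auto intro: SUP_upper)
  qed
qed

definition upper_exponent :: "(real \<Rightarrow> real) \<Rightarrow> real \<Rightarrow> bool" where
  "upper_exponent h a \<longleftrightarrow>
     (\<exists>C>0. \<forall>\<Lambda>>1. \<forall>\<^sub>F x in at_top. \<forall>l\<in>{1..\<Lambda>}. h (l * x) \<le> C * l powr a * h x)"

definition lower_exponent :: "(real \<Rightarrow> real) \<Rightarrow> real \<Rightarrow> bool" where
  "lower_exponent h b \<longleftrightarrow>
     (\<exists>D>0. \<forall>\<Lambda>>1. \<forall>\<^sub>F x in at_top. \<forall>l\<in>{1..\<Lambda>}. D * l powr b * h x \<le> h (l * x))"

definition global_upper_exponent :: "(real \<Rightarrow> real) \<Rightarrow> real \<Rightarrow> bool" where
  "global_upper_exponent h a \<longleftrightarrow>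
     (\<exists>C>0. \<forall>\<^sub>F x in at_top. \<forall>l\<ge>1. h (l * x) \<le> C * l powr a * h x)"

definition global_lower_exponent :: "(real \<Rightarrow> real) \<Rightarrow> real \<Rightarrow> bool" where
  "global_lower_exponent h b \<longleftrightarrow>
     (\<exists>D>0. \<forall>\<^sub>F x in at_top. \<forall>l\<ge>1. D * l powr b * h x \<le> h (l * x))"

lemma global_upper_exponentI:
  assumes "0 < C" "\<forall>\<^sub>F x in at_top. P x"
    and "\<And>x l. P x \<Longrightarrow> 1 \<le> l \<Longrightarrow> h (l * x) \<le> C * l powr a * h x"
  shows "global_upper_exponent h a"
  unfolding global_upper_exponent_def using assms by (blast intro: eventually_mono)

lemma global_lower_exponentI:
  assumes "0 < D" "\<forall>\<^sub>F x in at_top. P x"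
    and "\<And>x l. P x \<Longrightarrow> 1 \<le> l \<Longrightarrow> D * l powr b * h x \<le> h (l * x)"
  shows "global_lower_exponent h b"
  unfolding global_lower_exponent_def using assms by (blast intro: eventually_mono)

lemma global_upper_exponentE:
  assumes "global_upper_exponent h a"
  obtains C x0 where "0 < C" "\<And>x l. x0 \<le> x \<Longrightarrow> 1 \<le> l \<Longrightarrow> h (l * x) \<le> C * l powr a * h x"
  using assms unfolding global_upper_exponent_def eventually_at_top_linorder by blast

lemma global_lower_exponentE:
  assumes "global_lower_exponent h b"
  obtains D x0 where "0 < D" "\<And>x l. x0 \<le> x \<Longrightarrow> 1 \<le> l \<Longrightarrow> D * l powr b * h x \<le> h (l * x)"
  using assms unfolding global_lower_exponent_def eventually_at_top_linorder by blast

lemma upper_exponent_if_global: "global_upper_exponent h a \<Longrightarrow> upper_exponent h a"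
  unfolding global_upper_exponent_def upper_exponent_def by (force elim: eventually_mono)

lemma lower_exponent_if_global: "global_lower_exponent h b \<Longrightarrow> lower_exponent h b"
  unfolding global_lower_exponent_def lower_exponent_def by (force elim: eventually_mono)

lemma upper_index_eq_Inf:
  assumes pos: "\<forall>\<^sub>F x in at_top. 0 < h x"
  shows "upper_index h = Inf (ereal ` {a. upper_exponent h a})"
proof -
  have bound_iff: "(SUP l\<in>{1..\<Lambda>}. ereal (h (l * x) / (l powr a * h x))) \<le> ereal C
      \<longleftrightarrow> (\<forall>l\<in>{1..\<Lambda>}. h (l * x) \<le> C * l powr a * h x)" if "0 < h x" for x \<Lambda> C a
    using that by (simp add: SUP_le_iff pos_divide_le_eq mult.assoc)
  have "(\<exists>C>0. \<forall>\<Lambda>>1. Limsup at_top (\<lambda>x. SUP l\<in>{1..\<Lambda>}. ereal (h (l * x) / (l powr a * h x)))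
      \<le> ereal C) \<longleftrightarrow> upper_exponent h a" for a
  proof
    assume "\<exists>C>0. \<forall>\<Lambda>>1. Limsup at_top (\<lambda>x. SUP l\<in>{1..\<Lambda>}. ereal (h (l * x) / (l powr a * h x)))
      \<le> ereal C"
    then obtain C where "0 < C" and C: "\<And>\<Lambda>. 1 < \<Lambda> \<Longrightarrow>
        Limsup at_top (\<lambda>x. SUP l\<in>{1..\<Lambda>}. ereal (h (l * x) / (l powr a * h x))) \<le> ereal C"
      by blast
    have C2: "Limsup at_top (\<lambda>x. SUP l\<in>{1..\<Lambda>}. ereal (h (l * x) / (l powr a * h x)))
        < ereal (2 * C)" if "1 < \<Lambda>" for \<Lambda>
      using C[OF that] \<open>0 < C\<close> by (simp add: le_less_trans)
    have "\<forall>\<^sub>F x in at_top. \<forall>l\<in>{1..\<Lambda>}. h (l * x) \<le> 2 * C * l powr a * h x" if "1 < \<Lambda>" for \<Lambda>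
      using Limsup_lessD[OF C2[OF that]] pos by eventually_elim (subst bound_iff[symmetric], auto)
    then show "upper_exponent h a"
      unfolding upper_exponent_def using \<open>0 < C\<close> by (intro exI[of _ "2 * C"]) auto
  next
    assume "upper_exponent h a"
    then obtain C where "0 < C"
      and C: "\<And>\<Lambda>. 1 < \<Lambda> \<Longrightarrow> \<forall>\<^sub>F x in at_top. \<forall>l\<in>{1..\<Lambda>}. h (l * x) \<le> C * l powr a * h x"
      unfolding upper_exponent_def by blast
    have "Limsup at_top (\<lambda>x. SUP l\<in>{1..\<Lambda>}. ereal (h (l * x) / (l powr a * h x))) \<le> ereal C"
      if "1 < \<Lambda>" for \<Lambda>
      by (rule Limsup_bounded) (use C[OF that] pos in \<open>eventually_elim, simp add: bound_iff\<close>)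
    then show "\<exists>C>0. \<forall>\<Lambda>>1. Limsup at_top (\<lambda>x. SUP l\<in>{1..\<Lambda>}. ereal (h (l * x) / (l powr a * h x)))
      \<le> ereal C"
      using \<open>0 < C\<close> by blast
  qed
  then show ?thesis
    unfolding upper_index_def by (auto intro!: arg_cong[where f = Inf])
qed

lemma lower_index_eq_Sup:
  assumes pos: "\<forall>\<^sub>F x in at_top. 0 < h x"
  shows "lower_index h = Sup (ereal ` {b. lower_exponent h b})"
proof -
  have bound_iff: "ereal D \<le> (INF l\<in>{1..\<Lambda>}. ereal (h (l * x) / (l powr b * h x)))
      \<longleftrightarrow> (\<forall>l\<in>{1..\<Lambda>}. D * l powr b * h x \<le> h (l * x))" if "0 < h x" for x \<Lambda> D b
    using that by (simp add: le_INF_iff pos_le_divide_eq mult.assoc)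
  have "(\<exists>D>0. \<forall>\<Lambda>>1. Liminf at_top (\<lambda>x. INF l\<in>{1..\<Lambda>}. ereal (h (l * x) / (l powr b * h x)))
      \<ge> ereal D) \<longleftrightarrow> lower_exponent h b" for b
  proof
    assume "\<exists>D>0. \<forall>\<Lambda>>1. Liminf at_top (\<lambda>x. INF l\<in>{1..\<Lambda>}. ereal (h (l * x) / (l powr b * h x)))
      \<ge> ereal D"
    then obtain D where "0 < D" and D: "\<And>\<Lambda>. 1 < \<Lambda> \<Longrightarrow>
        Liminf at_top (\<lambda>x. INF l\<in>{1..\<Lambda>}. ereal (h (l * x) / (l powr b * h x))) \<ge> ereal D"
      by blast
    have D2: "ereal (D / 2)
        < Liminf at_top (\<lambda>x. INF l\<in>{1..\<Lambda>}. ereal (h (l * x) / (l powr b * h x)))" if "1 < \<Lambda>" for \<Lambda>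
      by (rule less_le_trans[OF _ D[OF that]]) (use \<open>0 < D\<close> in simp)
    have "\<forall>\<^sub>F x in at_top. \<forall>l\<in>{1..\<Lambda>}. D / 2 * l powr b * h x \<le> h (l * x)" if "1 < \<Lambda>" for \<Lambda>
      using less_LiminfD[OF D2[OF that]] pos by eventually_elim (subst bound_iff[symmetric], auto)
    then show "lower_exponent h b"
      unfolding lower_exponent_def using \<open>0 < D\<close> by (intro exI[of _ "D / 2"]) auto
  next
    assume "lower_exponent h b"
    then obtain D where "0 < D"
      and D: "\<And>\<Lambda>. 1 < \<Lambda> \<Longrightarrow> \<forall>\<^sub>F x in at_top. \<forall>l\<in>{1..\<Lambda>}. D * l powr b * h x \<le> h (l * x)"
      unfolding lower_exponent_def by blast
    have "Liminf at_top (\<lambda>x. INF l\<in>{1..\<Lambda>}. ereal (h (l * x) / (l powr b * h x))) \<ge> ereal D"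
      if "1 < \<Lambda>" for \<Lambda>
      by (rule Liminf_bounded) (use D[OF that] pos in \<open>eventually_elim, simp add: bound_iff\<close>)
    then show "\<exists>D>0. \<forall>\<Lambda>>1. Liminf at_top (\<lambda>x. INF l\<in>{1..\<Lambda>}. ereal (h (l * x) / (l powr b * h x)))
      \<ge> ereal D"
      using \<open>0 < D\<close> by blast
  qed
  then show ?thesis
    unfolding lower_index_def by (auto intro!: arg_cong[where f = Sup])
qed

lemma upper_exponent_nonneg:
  assumes "upper_exponent h a" "mono h" "\<forall>\<^sub>F x in at_top. 0 < h x"
  shows "0 \<le> a"
proof (rule ccontr)
  assume "\<not> 0 \<le> a"
  obtain C where "0 < C"
    and C: "\<And>\<Lambda>. 1 < \<Lambda> \<Longrightarrow> \<forall>\<^sub>F x in at_top. \<forall>l\<in>{1..\<Lambda>}. h (l * x) \<le> C * l powr a * h x"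
    using assms(1) unfolding upper_exponent_def by blast
  have "((\<lambda>\<Lambda>. C * \<Lambda> powr a) \<longlongrightarrow> 0) at_top"
    using \<open>\<not> 0 \<le> a\<close> by (intro tendsto_mult_right_zero tendsto_neg_powr filterlim_ident) auto
  then have "\<forall>\<^sub>F \<Lambda> in at_top. C * \<Lambda> powr a < 1"
    by (rule order_tendstoD) simp
  then have "\<forall>\<^sub>F \<Lambda> in at_top. 1 < \<Lambda> \<and> C * \<Lambda> powr a < 1"
    using eventually_gt_at_top[of 1] by eventually_elim simp
  then obtain \<Lambda> where "1 < \<Lambda>" "C * \<Lambda> powr a < 1"
    by (auto simp: eventually_at_top_linorder)
  have "\<forall>\<^sub>F x in at_top. 0 \<le> x \<and> 0 < h x \<and> h (\<Lambda> * x) \<le> C * \<Lambda> powr a * h x"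
    using eventually_ge_at_top[of 0] assms(3) C[OF \<open>1 < \<Lambda>\<close>]
    by eventually_elim (use \<open>1 < \<Lambda>\<close> in auto)
  then obtain x where x: "0 \<le> x" "0 < h x" "h (\<Lambda> * x) \<le> C * \<Lambda> powr a * h x"
    by (auto simp: eventually_at_top_linorder)
  have "C * \<Lambda> powr a * h x < h x"
    using mult_strict_right_mono[OF \<open>C * \<Lambda> powr a < 1\<close> \<open>0 < h x\<close>] by simp
  then have "h (\<Lambda> * x) < h x"
    using x(3) by linarith
  moreover have "h x \<le> h (\<Lambda> * x)"
    using \<open>1 < \<Lambda>\<close> x(1) by (intro monoD[OF \<open>mono h\<close>]) (simp add: mult_le_cancel_right1)
  ultimately show False
    by simp
qed

lemma lower_exponent_zero:
  assumes "mono h"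
  shows "lower_exponent h 0"
  unfolding lower_exponent_def
proof (intro exI[of _ 1] conjI allI impI)
  show "\<forall>\<^sub>F x in at_top. \<forall>l\<in>{1..\<Lambda>}. 1 * l powr 0 * h x \<le> h (l * x)" for \<Lambda> :: real
    using eventually_ge_at_top[of 0]
    by eventually_elim (auto intro!: monoD[OF assms] simp: mult_le_cancel_right1)
qed simp

lemma scaling_power_le:
  fixes h :: "real \<Rightarrow> real"
  assumes "0 \<le> x0" "1 \<le> \<Lambda>" "0 \<le> K"
    and step: "\<And>x. x0 \<le> x \<Longrightarrow> h (\<Lambda> * x) \<le> K * h x" and "x0 \<le> x"
  shows "h (\<Lambda> ^ k * x) \<le> K ^ k * h x"
proof (induction k)
  case (Suc k)
  have "x \<le> \<Lambda> ^ k * x"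
    using assms by (simp add: mult_le_cancel_right1 one_le_power)
  then have "x0 \<le> \<Lambda> ^ k * x"
    using \<open>x0 \<le> x\<close> by linarith
  then have "h (\<Lambda> ^ Suc k * x) \<le> K * h (\<Lambda> ^ k * x)"
    using step by (simp add: mult.assoc)
  also have "\<dots> \<le> K ^ Suc k * h x"
    using mult_left_mono[OF Suc.IH \<open>0 \<le> K\<close>] by simp
  finally show ?case .
qed simp

lemma ex_power_le_less:
  fixes \<Lambda> l :: real
  assumes "1 < \<Lambda>" "1 \<le> l"
  shows "\<exists>k. \<Lambda> ^ k \<le> l \<and> l < \<Lambda> ^ Suc k"
proof -
  obtain n where "l < \<Lambda> ^ n"
    using real_arch_pow[OF \<open>1 < \<Lambda>\<close>] by blast
  then show ?thesis
  proof (induction n)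
    case (Suc n)
    then show ?case
      by (cases "l < \<Lambda> ^ n") (auto simp: not_less)
  qed (use \<open>1 \<le> l\<close> in simp)
qed

lemma local_scaling_bound_imp_global:
  fixes h :: "real \<Rightarrow> real"
  assumes "0 \<le> x0" "2 \<le> \<Lambda>" "0 < C" "a \<le> a'" "C * \<Lambda> powr a \<le> \<Lambda> powr a'"
    and nonneg: "\<And>x. x0 \<le> x \<Longrightarrow> 0 \<le> h x"
    and local: "\<And>x l. x0 \<le> x \<Longrightarrow> l \<in> {1..\<Lambda>} \<Longrightarrow> h (l * x) \<le> C * l powr a * h x"
    and "x0 \<le> x" "1 \<le> l"
  shows "h (l * x) \<le> C * l powr a' * h x"
proof -
  obtain k where k: "\<Lambda> ^ k \<le> l" "l < \<Lambda> ^ Suc k"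
    using ex_power_le_less[of \<Lambda> l] assms by auto
  define r where "r = l / \<Lambda> ^ k"
  have "1 \<le> r" "r \<le> \<Lambda>" and l_eq: "l = r * \<Lambda> ^ k"
    using k \<open>2 \<le> \<Lambda>\<close> by (simp_all add: r_def field_simps)
  have "x \<le> \<Lambda> ^ k * x"
    using assms by (simp add: mult_le_cancel_right1 one_le_power)
  then have "h (l * x) \<le> C * r powr a * h (\<Lambda> ^ k * x)"
    using local[of "\<Lambda> ^ k * x" r] \<open>x0 \<le> x\<close> \<open>1 \<le> r\<close> \<open>r \<le> \<Lambda>\<close> by (simp add: l_eq mult.assoc)
  also have "\<dots> \<le> C * r powr a * ((C * \<Lambda> powr a) ^ k * h x)"
    using assms local[of _ \<Lambda>]
    by (intro mult_left_mono scaling_power_le[where h = h, OF \<open>0 \<le> x0\<close>]) auto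
  also have "\<dots> \<le> C * r powr a * ((\<Lambda> ^ k) powr a' * h x)"
  proof -
    have "(C * \<Lambda> powr a) ^ k \<le> (\<Lambda> powr a') ^ k"
      using assms by (intro power_mono) auto
    also have "\<dots> = (\<Lambda> ^ k) powr a'"
      using \<open>2 \<le> \<Lambda>\<close> by (simp add: powr_power powr_realpow[symmetric] powr_powr mult.commute)
    finally show ?thesis
      using assms by (intro mult_left_mono mult_right_mono) auto
  qed
  also have "\<dots> = C * l powr a * (\<Lambda> ^ k) powr (a' - a) * h x"
    using \<open>2 \<le> \<Lambda>\<close> \<open>1 \<le> r\<close> by (simp add: l_eq powr_mult powr_add[symmetric])
  also have "\<dots> \<le> C * l powr a * l powr (a' - a) * h x"
    using assms k(1) by (intro mult_left_mono mult_right_mono powr_mono2) auto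
  also have "\<dots> = C * l powr a' * h x"
    by (simp add: powr_add[symmetric])
  finally show ?thesis .
qed

lemma upper_exponent_imp_global:
  assumes "upper_exponent h a" "a < a'" and pos: "\<forall>\<^sub>F x in at_top. 0 < h x"
  shows "global_upper_exponent h a'"
proof -
  obtain C where "0 < C"
    and C: "\<And>\<Lambda>. 1 < \<Lambda> \<Longrightarrow> \<forall>\<^sub>F x in at_top. \<forall>l\<in>{1..\<Lambda>}. h (l * x) \<le> C * l powr a * h x"
    using assms(1) unfolding upper_exponent_def by blast
  define \<Lambda> where "\<Lambda> = max 2 (C powr (1 / (a' - a)))"
  have "2 \<le> \<Lambda>"
    by (simp add: \<Lambda>_def)
  have "C = (C powr (1 / (a' - a))) powr (a' - a)"
    using \<open>0 < C\<close> \<open>a < a'\<close> by (simp add: powr_powr)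
  also have "\<dots> \<le> \<Lambda> powr (a' - a)"
    using \<open>a < a'\<close> by (intro powr_mono2) (auto simp: \<Lambda>_def)
  finally have "C * \<Lambda> powr a \<le> \<Lambda> powr a'"
    using \<open>2 \<le> \<Lambda>\<close> by (simp add: powr_diff field_simps)
  have "\<forall>\<^sub>F x in at_top. 0 \<le> x \<and> 0 < h x \<and> (\<forall>l\<in>{1..\<Lambda>}. h (l * x) \<le> C * l powr a * h x)"
    using eventually_ge_at_top[of 0] pos C[of \<Lambda>] \<open>2 \<le> \<Lambda>\<close> by (simp add: eventually_conj_iff)
  then obtain x0 where
    x0: "\<And>x. x0 \<le> x \<Longrightarrow> 0 \<le> x \<and> 0 < h x \<and> (\<forall>l\<in>{1..\<Lambda>}. h (l * x) \<le> C * l powr a * h x)"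
    unfolding eventually_at_top_linorder by blast
  then have "h (l * x) \<le> C * l powr a' * h x" if "x0 \<le> x" "1 \<le> l" for x l
    using local_scaling_bound_imp_global[of x0 \<Lambda> C a a' h x l] that \<open>0 < C\<close> \<open>a < a'\<close>
      \<open>2 \<le> \<Lambda>\<close> \<open>C * \<Lambda> powr a \<le> \<Lambda> powr a'\<close> by force
  then show ?thesis
    by (rule global_upper_exponentI[OF \<open>0 < C\<close> eventually_ge_at_top[of x0]])
qed

lemma lower_exponent_imp_global:
  assumes "lower_exponent h b" "b' < b" and pos: "\<forall>\<^sub>F x in at_top. 0 < h x"
  shows "global_lower_exponent h b'"
proof -
  have le_iff_inverse_le: "D * l powr c * h x \<le> h y
      \<longleftrightarrow> inverse (h y) \<le> inverse D * l powr (- c) * inverse (h x)"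
    if "0 < D" "0 < l" "0 < h x" "0 < h y" for D l c x y
    using that by (simp add: powr_minus inverse_le_iff_le flip: inverse_mult_distrib)
  obtain x0 where x0: "\<And>x. x0 \<le> x \<Longrightarrow> 0 < h x"
    using pos unfolding eventually_at_top_linorder by blast
  have pos_scaled: "\<forall>\<^sub>F x in at_top. 0 < h x \<and> (\<forall>l\<ge>1. 0 < h (l * x))"
    using eventually_ge_at_top[of "max 0 x0"]
  proof eventually_elim
    case (elim x)
    then have "x \<le> l * x" if "1 \<le> l" for l
      using that by (simp add: mult_le_cancel_right1)
    then show ?case
      using elim x0 by (meson max.boundedE order.trans)
  qed
  obtain D where "0 < D"
    and D: "\<And>\<Lambda>. 1 < \<Lambda> \<Longrightarrow> \<forall>\<^sub>F x in at_top. \<forall>l\<in>{1..\<Lambda>}. D * l powr b * h x \<le> h (l * x)"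
    using assms(1) unfolding lower_exponent_def by blast
  have "upper_exponent (\<lambda>x. inverse (h x)) (- b)"
    unfolding upper_exponent_def
  proof (intro exI[of _ "inverse D"] conjI allI impI)
    show "\<forall>\<^sub>F x in at_top. \<forall>l\<in>{1..\<Lambda>}. inverse (h (l * x)) \<le> inverse D * l powr - b * inverse (h x)"
      if "1 < \<Lambda>" for \<Lambda>
      using D[OF that] pos_scaled by eventually_elim (auto simp: le_iff_inverse_le[OF \<open>0 < D\<close>])
  qed (use \<open>0 < D\<close> in simp)
  then have "global_upper_exponent (\<lambda>x. inverse (h x)) (- b')"
    using \<open>b' < b\<close> pos by (intro upper_exponent_imp_global) (auto elim: eventually_mono)
  then obtain C where "0 < C"
    and C: "\<forall>\<^sub>F x in at_top. \<forall>l\<ge>1. inverse (h (l * x)) \<le> C * l powr - b' * inverse (h x)"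
    unfolding global_upper_exponent_def by blast
  show ?thesis
    unfolding global_lower_exponent_def
  proof (intro exI[of _ "inverse C"] conjI)
    show "\<forall>\<^sub>F x in at_top. \<forall>l\<ge>1. inverse C * l powr b' * h x \<le> h (l * x)"
      using C pos_scaled
      by eventually_elim (auto simp: le_iff_inverse_le[of "inverse C"] \<open>0 < C\<close>)
  qed (use \<open>0 < C\<close> in simp)
qed

lemma lower_index_eq_inverse_upper_index:
  assumes "mono F" "mono G"
    and F_pos: "\<forall>\<^sub>F x in at_top. 0 < F x" and G_pos: "\<forall>\<^sub>F x in at_top. 0 < G x"
    and G_to_F: "\<And>a. 0 < a \<Longrightarrow> global_upper_exponent G a \<Longrightarrow> global_lower_exponent F (1 / a)"
    and F_to_G: "\<And>b. 0 < b \<Longrightarrow> global_lower_exponent F b \<Longrightarrow> global_upper_exponent G (1 / b)"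
  shows "lower_index F = inverse (upper_index G) \<and> upper_index G = inverse (lower_index F)"
proof -
  have G_nonneg: "0 \<le> a" if "upper_exponent G a" for a
    using upper_exponent_nonneg that \<open>mono G\<close> G_pos by blast
  have lower_eq: "lower_index F = inverse (upper_index G)"
    unfolding lower_index_eq_Sup[OF F_pos] upper_index_eq_Inf[OF G_pos]
  proof (intro antisym Sup_le_inverse_Inf inverse_Inf_le_Sup)
    show "0 \<in> {b. lower_exponent F b}"
      using lower_exponent_zero[OF \<open>mono F\<close>] by simp
    show "b \<in> {b. lower_exponent F b}" if "a \<in> {a. upper_exponent G a}" "0 < b" "a * b < 1" for a b
    proof -
      have "global_upper_exponent G (1 / b)"
        using that G_pos by (intro upper_exponent_imp_global[of G a]) (auto simp: field_simps)
      then have "global_lower_exponent F b"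
        using G_to_F[of "1 / b"] \<open>0 < b\<close> by simp
      then show ?thesis
        by (simp add: lower_exponent_if_global)
    qed
    show "a \<in> {a. upper_exponent G a}" if "b \<in> {b. lower_exponent F b}" "0 < b" "1 < a * b" for a b
    proof -
      have "0 < a"
        using that by (smt (verit) mult_nonpos_nonneg)
      then have "global_lower_exponent F (1 / a)"
        using that F_pos by (intro lower_exponent_imp_global[of F b]) (auto simp: field_simps)
      then have "global_upper_exponent G a"
        using F_to_G[of "1 / a"] \<open>0 < a\<close> by simp
      then show ?thesis
        by (simp add: upper_exponent_if_global)
    qed
  qed (use G_nonneg in blast)
  have "0 \<le> upper_index G"
    unfolding upper_index_eq_Inf[OF G_pos] using G_nonneg by (auto intro: INF_greatest)
  then show ?thesis
    using lower_eq by (simp add: ereal_inv_inv)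
qed

locale quotient_sequence =
  fixes m :: "nat \<Rightarrow> real"
  assumes pos: "\<And>j. 0 < m j" and nondecreasing: "mono m" and unbounded: "\<And>t. \<exists>j. t < m j"
begin

lemma Collect_le_eq_lessThan: "{j. m j \<le> t} = {..<card {j. m j \<le> t}}"
proof -
  obtain J where "t < m J"
    using unbounded by blast
  define k where "k = (LEAST j. t < m j)"
  have "t < m k"
    unfolding k_def using \<open>t < m J\<close> by (rule LeastI)
  have "{j. m j \<le> t} = {..<k}"
  proof (intro set_eqI iffI)
    fix j assume "j \<in> {j. m j \<le> t}"
    then show "j \<in> {..<k}"
      using \<open>t < m k\<close> monoD[OF nondecreasing, of k j] by (cases "k \<le> j") auto
  next
    fix j assume "j \<in> {..<k}"
    then show "j \<in> {j. m j \<le> t}"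
      unfolding k_def using not_less_Least[of j "\<lambda>j. t < m j"] by auto
  qed
  then show ?thesis
    by simp
qed

lemma finite_Collect_le: "finite {j. m j \<le> t}"
  by (subst Collect_le_eq_lessThan) simp

lemma le_iff_less_nu: "m j \<le> t \<longleftrightarrow> real j < nu m t"
proof -
  have "m j \<le> t \<longleftrightarrow> j \<in> {..<card {j. m j \<le> t}}"
    by (metis Collect_le_eq_lessThan mem_Collect_eq)
  then show ?thesis
    by (simp add: nu_def)
qed

lemma step_fun_le_iff:
  assumes "1 \<le> x"
  shows "step_fun m x \<le> t \<longleftrightarrow> x < nu m t + 1"
proof -
  have "real (nat (\<lfloor>x\<rfloor> - 1)) = real_of_int \<lfloor>x\<rfloor> - 1"
    using assms by simp
  moreover have "x < nu m t + 1 \<longleftrightarrow> \<lfloor>x\<rfloor> \<le> int (card {j. m j \<le> t})"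
    unfolding nu_def using floor_less_iff[of x "int (card {j. m j \<le> t}) + 1"] by simp
  ultimately show ?thesis
    unfolding step_fun_def le_iff_less_nu by (simp add: nu_def) linarith
qed

lemma step_fun_pos: "0 < step_fun m x"
  by (simp add: step_fun_def pos)

lemma mono_step_fun: "mono (step_fun m)"
  unfolding step_fun_def
  by (intro monoI monoD[OF nondecreasing] nat_mono diff_right_mono floor_mono)

lemma mono_nu: "mono (nu m)"
proof (rule monoI)
  fix s t :: real assume "s \<le> t"
  then have "{j. m j \<le> s} \<subseteq> {j. m j \<le> t}"
    by auto
  then show "nu m s \<le> nu m t"
    unfolding nu_def by (simp add: card_mono finite_Collect_le)
qed

lemma filterlim_nu: "filterlim (nu m) at_top at_top"
  unfolding filterlim_at_top
proof
  fix Z :: real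
  show "\<forall>\<^sub>F t in at_top. Z \<le> nu m t"
    using eventually_ge_at_top[of "m (nat \<lceil>Z\<rceil>)"]
    by eventually_elim (metis le_iff_less_nu less_imp_le order.trans real_nat_ceiling_ge)
qed

lemma filterlim_step_fun: "filterlim (step_fun m) at_top at_top"
  unfolding filterlim_at_top
proof
  fix Z :: real
  show "\<forall>\<^sub>F x in at_top. Z \<le> step_fun m x"
    using eventually_ge_at_top[of "max 1 (nu m Z + 1)"]
  proof eventually_elim
    case (elim x)
    then have "\<not> step_fun m x \<le> Z"
      using step_fun_le_iff[of x Z] by auto
    then show ?case
      by simp
  qed
qed

lemma nu_scaling_le:
  assumes "0 < b" "0 < D" "1 \<le> nu m t" "1 \<le> l"
    and lower: "\<And>\<mu>. 1 \<le> \<mu> \<Longrightarrow>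
      D * \<mu> powr b * step_fun m (nu m t + 1) \<le> step_fun m (\<mu> * (nu m t + 1))"
  shows "nu m (l * t) \<le> (nu m t + 1) * max 1 ((inverse D * l) powr (1 / b))"
proof (cases "nu m (l * t) \<le> nu m t + 1")
  case True
  have "(nu m t + 1) * 1 \<le> (nu m t + 1) * max 1 ((inverse D * l) powr (1 / b))"
    using assms by (intro mult_left_mono) auto
  then show ?thesis
    using True by simp
next
  case False
  define \<mu> where "\<mu> = nu m (l * t) / (nu m t + 1)"
  have "1 \<le> \<mu>" and N_eq: "nu m (l * t) = \<mu> * (nu m t + 1)"
    using False assms by (auto simp: \<mu>_def)
  have "0 < t"
    using step_fun_le_iff[of "nu m t" t] step_fun_pos[of "nu m t"] assms by simp
  have "D * \<mu> powr b * t < D * \<mu> powr b * step_fun m (nu m t + 1)"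
    using step_fun_le_iff[of "nu m t + 1" t] assms \<open>1 \<le> \<mu>\<close> by simp
  also have "\<dots> \<le> step_fun m (nu m (l * t))"
    using lower[OF \<open>1 \<le> \<mu>\<close>] by (simp add: N_eq)
  also have "\<dots> \<le> l * t"
    using step_fun_le_iff[of "nu m (l * t)" "l * t"] False assms by simp
  finally have "\<mu> powr b \<le> inverse D * l"
    using \<open>0 < t\<close> \<open>0 < D\<close> by (simp add: field_simps)
  then have "\<mu> \<le> (inverse D * l) powr (1 / b)"
    using assms \<open>1 \<le> \<mu>\<close> by (simp add: powr_le_iff_le_powr_inverse)
  then show ?thesis
    using assms by (simp add: N_eq max.coboundedI2 mult_left_mono)
qed

lemma global_upper_exponent_nu:
  assumes "0 < b" "global_lower_exponent (step_fun m) b"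
  shows "global_upper_exponent (nu m) (1 / b)"
proof -
  obtain D x0 where "0 < D"
    and D: "\<And>x l. x0 \<le> x \<Longrightarrow> 1 \<le> l \<Longrightarrow> D * l powr b * step_fun m x \<le> step_fun m (l * x)"
    using assms(2) by (rule global_lower_exponentE) blast
  show ?thesis
  proof (rule global_upper_exponentI)
    show "0 < 2 * max 1 (inverse D powr (1 / b))"
      by simp
    show "\<forall>\<^sub>F t in at_top. max 1 x0 \<le> nu m t"
      using filterlim_nu unfolding filterlim_at_top by blast
    fix t l :: real assume t: "max 1 x0 \<le> nu m t" and "1 \<le> l"
    have "nu m (l * t) \<le> (nu m t + 1) * max 1 ((inverse D * l) powr (1 / b))"
      using t \<open>1 \<le> l\<close> by (intro nu_scaling_le D assms(1) \<open>0 < D\<close>) auto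
    also have "\<dots> \<le> 2 * nu m t * (max 1 (inverse D powr (1 / b)) * l powr (1 / b))"
      using t \<open>1 \<le> l\<close> \<open>0 < D\<close> \<open>0 < b\<close> by (intro mult_mono max_one_powr_mult_le) auto
    finally show "nu m (l * t) \<le> 2 * max 1 (inverse D powr (1 / b)) * l powr (1 / b) * nu m t"
      by (simp add: ac_simps)
  qed
qed

lemma nu_scaling_ge:
  assumes "0 < a" "0 < C" "1 \<le> nu m t" "1 \<le> l"
    and upper: "\<And>\<mu>. 1 \<le> \<mu> \<Longrightarrow>
      step_fun m (\<mu> * nu m t) \<le> C * \<mu> powr a * step_fun m (nu m t)"
  shows "(inverse C * l) powr (1 / a) * nu m t \<le> 2 * nu m (l * t)"
proof -
  define n N where "n = nu m t" and "N = nu m (l * t)"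
  have "step_fun m n \<le> t"
    using step_fun_le_iff[of n t] assms by (simp add: n_def)
  then have "0 < t"
    using step_fun_pos[of n] by linarith
  then have "n \<le> N"
    using monoD[OF mono_nu, of t "l * t"] assms by (simp add: n_def N_def)
  define \<mu> where "\<mu> = (N + 1) / n"
  have "1 \<le> \<mu>" and N_eq: "N + 1 = \<mu> * n"
    using \<open>n \<le> N\<close> assms by (auto simp: \<mu>_def n_def)
  have "l * t < step_fun m (N + 1)"
    using step_fun_le_iff[of "N + 1" "l * t"] \<open>n \<le> N\<close> assms by (simp add: N_def n_def)
  also have "\<dots> \<le> C * \<mu> powr a * step_fun m n"
    using upper[OF \<open>1 \<le> \<mu>\<close>] by (simp add: N_eq n_def)
  also have "\<dots> \<le> C * \<mu> powr a * t"
    using \<open>step_fun m n \<le> t\<close> \<open>0 < C\<close> by (intro mult_left_mono) auto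
  finally have "inverse C * l \<le> \<mu> powr a"
    using \<open>0 < t\<close> \<open>0 < C\<close> by (simp add: field_simps)
  then have "(inverse C * l) powr (1 / a) \<le> \<mu>"
    using assms \<open>1 \<le> \<mu>\<close> by (simp add: powr_le_iff_le_powr_inverse)
  then have "(inverse C * l) powr (1 / a) * n \<le> N + 1"
    using assms by (simp add: N_eq n_def mult_right_mono)
  also have "\<dots> \<le> 2 * N"
    using \<open>n \<le> N\<close> assms by (simp add: n_def)
  finally show ?thesis
    by (simp add: N_def n_def)
qed

lemma global_lower_exponent_nu:
  assumes "0 < a" "global_upper_exponent (step_fun m) a"
  shows "global_lower_exponent (nu m) (1 / a)"
proof -
  obtain C x0 where "0 < C"
    and C: "\<And>x l. x0 \<le> x \<Longrightarrow> 1 \<le> l \<Longrightarrow> step_fun m (l * x) \<le> C * l powr a * step_fun m x"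
    using assms(2) by (rule global_upper_exponentE) blast
  show ?thesis
  proof (rule global_lower_exponentI)
    show "0 < inverse C powr (1 / a) / 2"
      using \<open>0 < C\<close> by simp
    show "\<forall>\<^sub>F t in at_top. max 1 x0 \<le> nu m t"
      using filterlim_nu unfolding filterlim_at_top by blast
    fix t l :: real assume t: "max 1 x0 \<le> nu m t" and "1 \<le> l"
    have "(inverse C * l) powr (1 / a) * nu m t \<le> 2 * nu m (l * t)"
      using t \<open>1 \<le> l\<close> by (intro nu_scaling_ge C assms(1) \<open>0 < C\<close>) auto
    then show "inverse C powr (1 / a) / 2 * l powr (1 / a) * nu m t \<le> nu m (l * t)"
      using \<open>0 < C\<close> \<open>1 \<le> l\<close> by (simp add: powr_mult)
  qed
qed

lemma step_fun_scaling_ge: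
  assumes "0 < a" "0 < C" "2 \<le> x" "1 \<le> l"
    and upper: "\<And>\<mu>. 1 \<le> \<mu> \<Longrightarrow>
      nu m (\<mu> * (step_fun m x / 2)) \<le> C * \<mu> powr a * nu m (step_fun m x / 2)"
  shows "(inverse (2 * C) * l) powr (1 / a) * step_fun m x \<le> 2 * step_fun m (l * x)"
proof -
  define t s where "t = step_fun m x" and "s = step_fun m (l * x)"
  define \<mu> where "\<mu> = 2 * s / t"
  have "0 < t" "x \<le> l * x"
    using assms step_fun_pos by (simp_all add: t_def)
  then have "t \<le> s"
    using monoD[OF mono_step_fun] by (simp add: t_def s_def)
  then have "1 \<le> \<mu>" and s_eq: "s = \<mu> * (t / 2)"
    using \<open>0 < t\<close> by (simp_all add: \<mu>_def field_simps)
  have "nu m (t / 2) + 1 \<le> x"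
    using step_fun_le_iff[of x "t / 2"] assms \<open>0 < t\<close> by (simp add: t_def)
  have "l * x < nu m s + 1"
    using step_fun_le_iff[of "l * x" s] assms \<open>x \<le> l * x\<close> by (simp add: s_def)
  then have "l * x / 2 \<le> nu m (\<mu> * (t / 2))"
    using assms \<open>x \<le> l * x\<close> unfolding s_eq[symmetric] by linarith
  also have "\<dots> \<le> C * \<mu> powr a * nu m (t / 2)"
    using upper[OF \<open>1 \<le> \<mu>\<close>] by (simp add: t_def)
  also have "\<dots> \<le> C * \<mu> powr a * x"
    using \<open>nu m (t / 2) + 1 \<le> x\<close> \<open>0 < C\<close> by (intro mult_left_mono) auto
  finally have "inverse (2 * C) * l \<le> \<mu> powr a"
    using assms by (simp add: field_simps)
  then have "(inverse (2 * C) * l) powr (1 / a) \<le> \<mu>"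
    using assms \<open>1 \<le> \<mu>\<close> by (simp add: powr_le_iff_le_powr_inverse)
  then have "(inverse (2 * C) * l) powr (1 / a) * t \<le> 2 * s"
    using mult_right_mono[of _ _ t] \<open>0 < t\<close> by (simp add: s_eq)
  then show ?thesis
    by (simp only: t_def s_def)
qed

lemma global_lower_exponent_step_fun:
  assumes "0 < a" "global_upper_exponent (nu m) a"
  shows "global_lower_exponent (step_fun m) (1 / a)"
proof -
  obtain C t0 where "0 < C"
    and C: "\<And>t l. t0 \<le> t \<Longrightarrow> 1 \<le> l \<Longrightarrow> nu m (l * t) \<le> C * l powr a * nu m t"
    using assms(2) by (rule global_upper_exponentE) blast
  show ?thesis
  proof (rule global_lower_exponentI)
    show "0 < inverse (2 * C) powr (1 / a) / 2"
      using \<open>0 < C\<close> by simp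
    show "\<forall>\<^sub>F x in at_top. 2 \<le> x \<and> 2 * t0 \<le> step_fun m x"
      by (intro eventually_conj eventually_ge_at_top
          filterlim_step_fun[unfolded filterlim_at_top, rule_format])
    fix x l :: real assume x: "2 \<le> x \<and> 2 * t0 \<le> step_fun m x" and "1 \<le> l"
    have "(inverse (2 * C) * l) powr (1 / a) * step_fun m x \<le> 2 * step_fun m (l * x)"
      using x \<open>1 \<le> l\<close> by (intro step_fun_scaling_ge C assms(1) \<open>0 < C\<close>) auto
    then have "inverse (2 * C) powr (1 / a) * l powr (1 / a) * step_fun m x
        \<le> 2 * step_fun m (l * x)"
      using \<open>0 < C\<close> \<open>1 \<le> l\<close> by (subst (asm) powr_mult) auto
    then show "inverse (2 * C) powr (1 / a) / 2 * l powr (1 / a) * step_fun m x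
        \<le> step_fun m (l * x)"
      by simp
  qed
qed

lemma step_fun_scaling_le:
  assumes "0 < b" "0 < D" "2 \<le> x" "1 \<le> l"
    and lower: "\<And>\<mu>. 1 \<le> \<mu> \<Longrightarrow>
      D * \<mu> powr b * nu m (step_fun m x) \<le> nu m (\<mu> * step_fun m x)"
  shows "step_fun m (l * x) \<le> 2 * step_fun m x * max 1 ((2 / D * l) powr (1 / b))"
proof -
  define t s where "t = step_fun m x" and "s = step_fun m (l * x)"
  have "0 < t" "x \<le> l * x"
    using assms step_fun_pos by (simp_all add: t_def)
  have "s \<le> 2 * t * max 1 ((2 / D * l) powr (1 / b))"
  proof (cases "s \<le> 2 * t")
    case True
    have "2 * t * 1 \<le> 2 * t * max 1 ((2 / D * l) powr (1 / b))"
      using \<open>0 < t\<close> by (intro mult_left_mono) auto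
    then show ?thesis
      using True by simp
  next
    case False
    define \<mu> where "\<mu> = s / (2 * t)"
    have "1 \<le> \<mu>" and s_eq: "s / 2 = \<mu> * t"
      using False \<open>0 < t\<close> by (simp_all add: \<mu>_def field_simps)
    have "x < nu m t + 1"
      using step_fun_le_iff[of x t] assms by (simp add: t_def)
    have "nu m (s / 2) + 1 \<le> l * x"
      using step_fun_le_iff[of "l * x" "s / 2"] False \<open>0 < t\<close> assms \<open>x \<le> l * x\<close>
      by (simp add: s_def)
    have "D * \<mu> powr b * (x / 2) \<le> D * \<mu> powr b * nu m t"
      using \<open>x < nu m t + 1\<close> assms by (intro mult_left_mono) auto
    also have "\<dots> \<le> nu m (s / 2)"
      using lower[OF \<open>1 \<le> \<mu>\<close>] by (simp add: s_eq t_def)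
    also have "\<dots> \<le> l * x"
      using \<open>nu m (s / 2) + 1 \<le> l * x\<close> by simp
    finally have "\<mu> powr b \<le> 2 / D * l"
      using assms by (simp add: field_simps)
    then have "\<mu> \<le> (2 / D * l) powr (1 / b)"
      using assms \<open>1 \<le> \<mu>\<close> by (simp add: powr_le_iff_le_powr_inverse)
    then show ?thesis
      using \<open>0 < t\<close> s_eq by (simp add: max.coboundedI2 mult_left_mono)
  qed
  then show ?thesis
    by (simp only: s_def t_def)
qed

lemma global_upper_exponent_step_fun:
  assumes "0 < b" "global_lower_exponent (nu m) b"
  shows "global_upper_exponent (step_fun m) (1 / b)"
proof -
  obtain D t0 where "0 < D"
    and D: "\<And>t l. t0 \<le> t \<Longrightarrow> 1 \<le> l \<Longrightarrow> D * l powr b * nu m t \<le> nu m (l * t)"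
    using assms(2) by (rule global_lower_exponentE) blast
  show ?thesis
  proof (rule global_upper_exponentI)
    show "0 < 2 * max 1 ((2 / D) powr (1 / b))"
      by simp
    show "\<forall>\<^sub>F x in at_top. 2 \<le> x \<and> t0 \<le> step_fun m x"
      by (intro eventually_conj eventually_ge_at_top
          filterlim_step_fun[unfolded filterlim_at_top, rule_format])
    fix x l :: real assume x: "2 \<le> x \<and> t0 \<le> step_fun m x" and "1 \<le> l"
    have "step_fun m (l * x) \<le> 2 * step_fun m x * max 1 ((2 / D * l) powr (1 / b))"
      using x \<open>1 \<le> l\<close> by (intro step_fun_scaling_le D assms(1) \<open>0 < D\<close>) auto
    also have "\<dots> \<le> 2 * step_fun m x * (max 1 ((2 / D) powr (1 / b)) * l powr (1 / b))"
      using \<open>1 \<le> l\<close> \<open>0 < D\<close> \<open>0 < b\<close> step_fun_pos[of x]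
      by (intro mult_left_mono max_one_powr_mult_le) auto
    finally show "step_fun m (l * x)
        \<le> 2 * max 1 ((2 / D) powr (1 / b)) * l powr (1 / b) * step_fun m x"
      by (simp add: ac_simps)
  qed
qed

lemma index_duality:
  "lower_index (step_fun m) = inverse (upper_index (nu m))
    \<and> upper_index (step_fun m) = inverse (lower_index (nu m))"
proof -
  have f_pos: "\<forall>\<^sub>F x in at_top. 0 < step_fun m x"
    by (simp add: step_fun_pos)
  have nu_pos: "\<forall>\<^sub>F t in at_top. 0 < nu m t"
    using filterlim_nu unfolding filterlim_at_top_dense by blast
  have "lower_index (step_fun m) = inverse (upper_index (nu m))"
    using lower_index_eq_inverse_upper_index[OF mono_step_fun mono_nu f_pos nu_pos]
      global_lower_exponent_step_fun global_upper_exponent_nu by blast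
  moreover have "upper_index (step_fun m) = inverse (lower_index (nu m))"
    using lower_index_eq_inverse_upper_index[OF mono_nu mono_step_fun nu_pos f_pos]
      global_lower_exponent_nu global_upper_exponent_step_fun by blast
  ultimately show ?thesis ..
qed

end

lemma quot_pos: "weight_sequence M \<Longrightarrow> 0 < quot M j"
  by (simp add: quot_def weight_sequence_def)

lemma mono_quot:
  assumes "weight_sequence M"
  shows "mono (quot M)"
proof (rule incseq_SucI)
  fix j
  have "(M (Suc j))\<^sup>2 \<le> M j * M (Suc (Suc j))" and "0 < M j" "0 < M (Suc j)"
    using assms unfolding weight_sequence_def by (metis Suc_eq_plus1 diff_Suc_1 le_add2)+
  then show "quot M j \<le> quot M (Suc j)"
    by (simp add: quot_def field_simps power2_eq_square)
qed

lemma weight_sequence_le_quot_power: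
  assumes "weight_sequence M"
  shows "M p \<le> quot M (p - 1) ^ p"
proof (induction p)
  case (Suc p)
  have "0 < M p"
    using assms by (simp add: weight_sequence_def)
  then have "M (Suc p) = M p * quot M p"
    by (simp add: quot_def)
  also have "\<dots> \<le> quot M (p - 1) ^ p * quot M p"
    using Suc quot_pos[OF assms] by (intro mult_right_mono) (auto simp: less_imp_le)
  also have "\<dots> \<le> quot M p ^ p * quot M p"
    using monoD[OF mono_quot[OF assms], of "p - 1" p] quot_pos[OF assms]
    by (intro mult_right_mono power_mono) (auto simp: less_imp_le)
  finally show ?case
    by (simp add: mult.commute)
qed (use assms in \<open>simp add: weight_sequence_def\<close>)

lemma quotient_sequence_quot:
  assumes "weight_sequence M"
  shows "quotient_sequence (quot M)"
proof
  show "0 < quot M j" for j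
    using assms by (rule quot_pos)
  show "mono (quot M)"
    using assms by (rule mono_quot)
  show "\<exists>j. t < quot M j" for t
  proof -
    have "\<forall>\<^sub>F p in sequentially. t < root p (M p) \<and> 1 \<le> p"
      using assms unfolding weight_sequence_def filterlim_at_top_dense
      by (auto intro: eventually_conj eventually_ge_at_top)
    then obtain p where "t < root p (M p)" "1 \<le> p"
      by (auto simp: eventually_sequentially)
    note \<open>t < root p (M p)\<close>
    also have "root p (M p) \<le> root p (quot M (p - 1) ^ p)"
      using weight_sequence_le_quot_power[OF assms, of p] \<open>1 \<le> p\<close> by (intro real_root_le_mono) auto
    also have "\<dots> = quot M (p - 1)"
      using \<open>1 \<le> p\<close> quot_pos[OF assms, of "p - 1"] by (simp add: real_root_power_cancel)
    finally show ?thesis ..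
  qed
qed

theorem proposition4p1:
  fixes M :: "nat \<Rightarrow> real"
  assumes "weight_sequence M"
  shows "lower_index (step_fun (quot M)) = inverse (upper_index (nu (quot M)))
    \<and> upper_index (step_fun (quot M)) = inverse (lower_index (nu (quot M)))"
  using quotient_sequence.index_duality[OF quotient_sequence_quot[OF assms]] .

end
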